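(* Let $\rho\in(0,1)$ and $\sigma_x<\sigma_y$. For every $\mathbf a=(x_1,y_1)\in\mathbb R^2$ with $x_1^2+y_1^2<2x_2^{*2}$, $K(\mathbf a,\mathbf b^* )>0$.
   Context: Standing setup. Fix $\sigma_x,\sigma_y>0$ and $\rho\in(-1,1)$, and let $(\xi,\eta)$ be a bivariate normal random vector with mean $(0,0)$ and covariance matrix $\Sigma=\begin{pmatrix}\sigma_x^2&\rho\sigma_x\sigma_y\\ \rho\sigma_x\sigma_y&\sigma_y^2\end{pmatrix}$. Player I (the minimizer) chooses $\mathbf a=(x_1,y_1)\in\mathbb R^2$ and Player II (the maximizer) chooses $\mathbf b=(x_2,y_2)\in\mathbb R^2$. Let $C_1(\mathbf a,\mathbf b)=\{(x,y):(x_1-x)^2+(y_1-y)^2<(x_2-x)^2+(y_2-y)^2\}$ and $C_2(\mathbf a,\mathbf b)=\{(x,y):(x_1-x)^2+(y_1-y)^2>(x_2-x)^2+(y_2-y)^2\}$. The payoff to Player II (paid by Player I) is $K(\mathbf a,\mathbf b)=x_1+y_1$ if $\mathbf a=\mathbf b$, and $K(\mathbf a,\mathbf b)=(x_1+y_1)\,P((\xi,\eta)\in C_1(\mathbf a,\mathbf b))+(x_2+y_2)\,P((\xi,\eta)\in C_2(\mathbf a,\mathbf b))$ if $\mathbf a\neq\mathbf b$. For $\mathbf a=(x,y)$ write $-\mathbf a=(-x,-y)$. Let $x_2^*=\frac{\sqrt{2\pi(\sigma_x^2+2\rho\sigma_x\sigma_y+\sigma_y^2)}}{4}$, $\mathbf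 b^*=(x_2^*,x_2^* )$ and $\mathbf a^*=(-x_2^*,-x_2^* )$. *)

theory Defs
  imports "HOL-Analysis.Analysis"
begin

text \<open>Density of the centred bivariate normal vector (xi, eta) with standard deviations
  sx, sy and correlation r (points of R^2 are pairs of reals).\<close>
definition binorm_density :: "real \<Rightarrow> real \<Rightarrow> real \<Rightarrow> real \<times> real \<Rightarrow> real" where
  "binorm_density sx sy r p =
     (let x = fst p; y = snd p in
      exp (- (x\<^sup>2 / sx\<^sup>2 - 2 * r * x * y / (sx * sy) + y\<^sup>2 / sy\<^sup>2) / (2 * (1 - r\<^sup>2)))
      / (2 * pi * sx * sy * sqrt (1 - r\<^sup>2)))"

definition binorm :: "real \<Rightarrow> real \<Rightarrow> real \<Rightarrow> (real \<times> real) measure" where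
  "binorm sx sy r = density lborel (\<lambda>p. ennreal (binorm_density sx sy r p))"

definition C1 :: "real \<times> real \<Rightarrow> real \<times> real \<Rightarrow> (real \<times> real) set" where
  "C1 a b = {(x, y). (fst a - x)\<^sup>2 + (snd a - y)\<^sup>2 < (fst b - x)\<^sup>2 + (snd b - y)\<^sup>2}"

definition C2 :: "real \<times> real \<Rightarrow> real \<times> real \<Rightarrow> (real \<times> real) set" where
  "C2 a b = {(x, y). (fst a - x)\<^sup>2 + (snd a - y)\<^sup>2 > (fst b - x)\<^sup>2 + (snd b - y)\<^sup>2}"

definition payoff :: "real \<Rightarrow> real \<Rightarrow> real \<Rightarrow> real \<times> real \<Rightarrow> real \<times> real \<Rightarrow> real" where
  "payoff sx sy r a b =
     (if a = b then fst a + snd a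
      else (fst a + snd a) * measure (binorm sx sy r) (C1 a b)
         + (fst b + snd b) * measure (binorm sx sy r) (C2 a b))"

definition x2star :: "real \<Rightarrow> real \<Rightarrow> real \<Rightarrow> real" where
  "x2star sx sy r = sqrt (2 * pi * (sx\<^sup>2 + 2 * r * sx * sy + sy\<^sup>2)) / 4"

end

theory Submission
  imports Defs "HOL-Probability.Probability"
begin

text \<open>For \<open>a \<noteq> b\<close> the region \<open>C1 a b\<close> is the half-plane \<open>d1 x + d2 y < t\<close> with
  \<open>(d1, d2) = b - a\<close> and \<open>t = (|b|\<^sup>2 - |a|\<^sup>2) / 2\<close>, and \<open>d1 \<xi> + d2 \<eta>\<close> is centred normal with
  variance \<open>v = Var (d1 \<xi> + d2 \<eta>)\<close>. Hence, with \<open>c = x2star\<close> and \<open>P = P (N(0, v) > t)\<close>, the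
  payoff is \<open>(x1 + y1) (1 - P) + 2 c P\<close>, which is positive when \<open>x1 + y1 \<ge> 0\<close> since \<open>P > 0\<close>.
  Otherwise both coordinates of \<open>b - a\<close> are at least \<open>m = min (c - x1) (c - y1) > 0\<close>; as
  \<open>\<rho> > 0\<close> this gives \<open>v \<ge> m\<^sup>2 Var (\<xi> + \<eta>) = 8 c\<^sup>2 m\<^sup>2 / pi\<close>, and bounding the normal density by
  its maximum yields \<open>P \<ge> 1/2 - t / sqrt (2 pi v) \<ge> 1/2 - t / (4 c m)\<close>. Positivity then reduces
  to a polynomial inequality in \<open>c, x1, y1\<close>, which is a sum of squares.\<close>

definition binorm_variance :: "real \<Rightarrow> real \<Rightarrow> real \<Rightarrow> real \<Rightarrow> real \<Rightarrow> real" where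
  "binorm_variance sx sy r d1 d2 = sx\<^sup>2 * d1\<^sup>2 + 2 * r * sx * sy * d1 * d2 + sy\<^sup>2 * d2\<^sup>2"

lemma binorm_variance_commute: "binorm_variance sy sx r d2 d1 = binorm_variance sx sy r d1 d2"
  unfolding binorm_variance_def by (simp add: algebra_simps)

lemma binorm_variance_pos:
  fixes sx sy r d1 d2 :: real
  assumes "sx > 0" "sy > 0" "r\<^sup>2 < 1" "(d1, d2) \<noteq> (0, 0)"
  shows "binorm_variance sx sy r d1 d2 > 0"
proof -
  have sq1: "binorm_variance sx sy r d1 d2 = (sx * d1 + r * sy * d2)\<^sup>2 + (1 - r\<^sup>2) * sy\<^sup>2 * d2\<^sup>2"
   and sq2: "binorm_variance sx sy r d1 d2 = (sy * d2 + r * sx * d1)\<^sup>2 + (1 - r\<^sup>2) * sx\<^sup>2 * d1\<^sup>2"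
    unfolding binorm_variance_def by (simp_all add: power2_eq_square algebra_simps)
  show ?thesis
  proof (cases "d2 = 0")
    case True
    with assms have "(1 - r\<^sup>2) * sx\<^sup>2 * d1\<^sup>2 > 0" by simp
    then show ?thesis unfolding sq2 by (simp add: add_nonneg_pos)
  next
    case False
    with assms have "(1 - r\<^sup>2) * sy\<^sup>2 * d2\<^sup>2 > 0" by simp
    then show ?thesis unfolding sq1 by (simp add: add_nonneg_pos)
  qed
qed

lemma binorm_variance_mono:
  fixes sx sy r d1 d2 m :: real
  assumes "sx > 0" "sy > 0" "r \<ge> 0" "0 \<le> m" "m \<le> d1" "m \<le> d2"
  shows "m\<^sup>2 * binorm_variance sx sy r 1 1 \<le> binorm_variance sx sy r d1 d2"
proof -
  have "m\<^sup>2 \<le> d1\<^sup>2" "m\<^sup>2 \<le> d2\<^sup>2" "m\<^sup>2 \<le> d1 * d2"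
    using assms power_mono[of m d1 2] power_mono[of m d2 2] mult_mono[of m d1 m d2]
    by (auto simp: power2_eq_square)
  with assms have "0 \<le> sx\<^sup>2 * (d1\<^sup>2 - m\<^sup>2) + (2 * r * sx * sy) * (d1 * d2 - m\<^sup>2) + sy\<^sup>2 * (d2\<^sup>2 - m\<^sup>2)"
    by (intro add_nonneg_nonneg mult_nonneg_nonneg) auto
  then show ?thesis unfolding binorm_variance_def by (simp add: algebra_simps)
qed

lemma binorm_exponent_complete_square:
  fixes sx sy r d1 d2 x l :: real
  defines "v \<equiv> binorm_variance sx sy r d1 d2"
  assumes sx: "sx > 0" and sy: "sy > 0" and r: "r\<^sup>2 < 1" and d2: "d2 \<noteq> 0"
  shows "(x\<^sup>2 / sx\<^sup>2 - 2 * r * x * ((l - d1 * x) / d2) / (sx * sy) + ((l - d1 * x) / d2)\<^sup>2 / sy\<^sup>2) / (2 * (1 - r\<^sup>2))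
     = l\<^sup>2 / (2 * v) + (x - (r * sx * sy * d2 + sx\<^sup>2 * d1) / v * l)\<^sup>2 / (2 * (sx\<^sup>2 * sy\<^sup>2 * (1 - r\<^sup>2) * d2\<^sup>2 / v))"
proof -
  define M where "M = r * sx * sy * d2 + sx\<^sup>2 * d1"
  define W where "W = sy\<^sup>2 * d2\<^sup>2 * x\<^sup>2 - 2 * r * sx * sy * d2 * x * (l - d1 * x) + sx\<^sup>2 * (l - d1 * x)\<^sup>2"
  have vpos: "v > 0" unfolding v_def using binorm_variance_pos[OF sx sy r] d2 by simp
  have r1: "1 - r\<^sup>2 > 0" using r by simp
  have P: "v * W = (v * x - M * l)\<^sup>2 + (1 - r\<^sup>2) * sx\<^sup>2 * sy\<^sup>2 * d2\<^sup>2 * l\<^sup>2"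
    unfolding v_def binorm_variance_def W_def M_def by algebra
  have L: "(x\<^sup>2 / sx\<^sup>2 - 2 * r * x * ((l - d1 * x) / d2) / (sx * sy) + ((l - d1 * x) / d2)\<^sup>2 / sy\<^sup>2) / (2 * (1 - r\<^sup>2))
     = W / (sx\<^sup>2 * sy\<^sup>2 * d2\<^sup>2 * (2 * (1 - r\<^sup>2)))"
    unfolding W_def using sx sy d2 r1 by (simp add: field_simps power2_eq_square)
  have R: "l\<^sup>2 / (2 * v) + (x - M / v * l)\<^sup>2 / (2 * (sx\<^sup>2 * sy\<^sup>2 * (1 - r\<^sup>2) * d2\<^sup>2 / v))
     = ((v * x - M * l)\<^sup>2 + (1 - r\<^sup>2) * sx\<^sup>2 * sy\<^sup>2 * d2\<^sup>2 * l\<^sup>2) / (v * (sx\<^sup>2 * sy\<^sup>2 * d2\<^sup>2 * (2 * (1 - r\<^sup>2))))"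
    using sx sy d2 r1 vpos by (simp add: field_simps power2_eq_square)
  show ?thesis unfolding M_def[symmetric] L R P[symmetric] using vpos by simp
qed

text \<open>The joint density of \<open>(\<xi>, d1 \<xi> + d2 \<eta>)\<close>, split into the marginal density of the linear
  form and the conditional (normal) density of \<open>\<xi>\<close> given it.\<close>

lemma binorm_density_linear_factor:
  fixes sx sy r d1 d2 x l :: real
  defines "v \<equiv> binorm_variance sx sy r d1 d2"
  assumes sx: "sx > 0" and sy: "sy > 0" and r: "r\<^sup>2 < 1" and d2: "d2 \<noteq> 0"
  shows "binorm_density sx sy r (x, (l - d1 * x) / d2) / \<bar>d2\<bar> =
    normal_density 0 (sqrt v) l *
    normal_density ((r * sx * sy * d2 + sx\<^sup>2 * d1) / v * l) (sx * sy * sqrt (1 - r\<^sup>2) * \<bar>d2\<bar> / sqrt v) x"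
proof -
  define M where "M = (r * sx * sy * d2 + sx\<^sup>2 * d1) / v * l"
  define s where "s = sx * sy * sqrt (1 - r\<^sup>2) * \<bar>d2\<bar> / sqrt v"
  have vpos: "v > 0" unfolding v_def using binorm_variance_pos[OF sx sy r] d2 by simp
  have r1: "1 - r\<^sup>2 > 0" using r by simp
  have spos: "s > 0" unfolding s_def using sx sy r1 d2 vpos by simp
  have s2: "s\<^sup>2 = sx\<^sup>2 * sy\<^sup>2 * (1 - r\<^sup>2) * d2\<^sup>2 / v"
    unfolding s_def using r1 vpos by (simp add: power_mult_distrib power_divide)
  have E: "exp (- (x\<^sup>2 / sx\<^sup>2 - 2 * r * x * ((l - d1 * x) / d2) / (sx * sy) + ((l - d1 * x) / d2)\<^sup>2 / sy\<^sup>2) / (2 * (1 - r\<^sup>2)))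
     = exp (- l\<^sup>2 / (2 * v)) * exp (- (x - M)\<^sup>2 / (2 * s\<^sup>2))"
    unfolding minus_divide_left[symmetric] binorm_exponent_complete_square[OF sx sy r d2, folded v_def]
      M_def s2 v_def by (simp add: exp_add[symmetric])
  have "(2 * pi * v) * (2 * pi * s\<^sup>2) = (2 * pi * (sqrt v * s))\<^sup>2"
    using vpos by (simp add: power_mult_distrib power2_eq_square)
  then have "sqrt (2 * pi * v) * sqrt (2 * pi * s\<^sup>2) = 2 * pi * (sqrt v * s)"
    using spos vpos by (simp add: real_sqrt_mult[symmetric])
  also have "sqrt v * s = sx * sy * sqrt (1 - r\<^sup>2) * \<bar>d2\<bar>"
    unfolding s_def using vpos by simp
  finally have C: "sqrt (2 * pi * v) * sqrt (2 * pi * s\<^sup>2) = 2 * pi * sx * sy * sqrt (1 - r\<^sup>2) * \<bar>d2\<bar>"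
    by simp
  show ?thesis
    unfolding binorm_density_def normal_density_def Let_def fst_conv snd_conv
      M_def[symmetric] s_def[symmetric] E real_sqrt_pow2[OF less_imp_le[OF vpos]]
    using C by (simp add: field_simps)
qed

lemma binorm_density_measurable[measurable]: "binorm_density sx sy r \<in> borel_measurable borel"
  unfolding binorm_density_def Let_def borel_prod[symmetric] by measurable

lemma binorm_density_nonneg: "sx > 0 \<Longrightarrow> sy > 0 \<Longrightarrow> r\<^sup>2 < 1 \<Longrightarrow> binorm_density sx sy r p \<ge> 0"
  unfolding binorm_density_def Let_def by simp

lemma binorm_density_swap: "binorm_density sy sx r (y, x) = binorm_density sx sy r (x, y)"
  unfolding binorm_density_def Let_def by (simp add: algebra_simps)

lemma binorm_section_integral:
  fixes sx sy r d1 d2 x :: real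
  defines "v \<equiv> binorm_variance sx sy r d1 d2"
  assumes sx: "sx > 0" and sy: "sy > 0" and r: "r\<^sup>2 < 1" and d2: "d2 \<noteq> 0"
    and A[measurable]: "A \<in> sets borel"
  shows "(\<integral>\<^sup>+y. ennreal (binorm_density sx sy r (x, y)) * indicator A (d1 * x + d2 * y) \<partial>lborel) =
    (\<integral>\<^sup>+z. ennreal (normal_density 0 (sqrt v) z * normal_density ((r * sx * sy * d2 + sx\<^sup>2 * d1) / v * z)
        (sx * sy * sqrt (1 - r\<^sup>2) * \<bar>d2\<bar> / sqrt v) x) * indicator A z \<partial>lborel)"
proof -
  let ?f = "binorm_density sx sy r"
  have "(\<integral>\<^sup>+y. ennreal (?f (x, y)) * indicator A (d1 * x + d2 * y) \<partial>lborel)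
      = ennreal \<bar>1 / d2\<bar> * (\<integral>\<^sup>+z. ennreal (?f (x, - d1 * x / d2 + 1 / d2 * z))
          * indicator A (d1 * x + d2 * (- d1 * x / d2 + 1 / d2 * z)) \<partial>lborel)"
    using d2 A by (subst nn_integral_real_affine[where c="1/d2" and t="- d1 * x / d2"]) auto
  also have "\<dots> = (\<integral>\<^sup>+z. ennreal (?f (x, (z - d1 * x) / d2) / \<bar>d2\<bar>) * indicator A z \<partial>lborel)"
    using d2 binorm_density_nonneg[OF sx sy r]
    by (subst nn_integral_cmult[symmetric])
       (auto intro!: nn_integral_cong simp: ennreal_mult'[symmetric] field_simps)
  finally show ?thesis
    unfolding v_def binorm_density_linear_factor[OF sx sy r d2] .
qed

definition centered_normal :: "real \<Rightarrow> real measure" where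
  "centered_normal \<sigma> = density lborel (\<lambda>x. ennreal (normal_density 0 \<sigma> x))"

lemma distr_binorm_linear_nonzero_snd:
  fixes sx sy r d1 d2 :: real
  assumes sx: "sx > 0" and sy: "sy > 0" and r: "r\<^sup>2 < 1" and d2: "d2 \<noteq> 0"
  shows "distr (binorm sx sy r) lborel (\<lambda>p. d1 * fst p + d2 * snd p)
       = centered_normal (sqrt (binorm_variance sx sy r d1 d2))"
proof (rule measure_eqI)
  fix A assume "A \<in> sets (distr (binorm sx sy r) lborel (\<lambda>p. d1 * fst p + d2 * snd p))"
  then have A[measurable]: "A \<in> sets borel" by simp
  define v where "v = binorm_variance sx sy r d1 d2"
  define M where "M z = (r * sx * sy * d2 + sx\<^sup>2 * d1) / v * z" for z
  define s where "s = sx * sy * sqrt (1 - r\<^sup>2) * \<bar>d2\<bar> / sqrt v"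
  let ?f = "binorm_density sx sy r" and ?N = "\<lambda>z. normal_density 0 (sqrt v) z"
  have spos: "s > 0" unfolding s_def v_def using sx sy r d2 binorm_variance_pos[OF sx sy r, of d1 d2] by simp
  have L[measurable]: "(\<lambda>p::real \<times> real. d1 * fst p + d2 * snd p) \<in> borel_measurable borel"
    unfolding borel_prod[symmetric] by measurable
  have "emeasure (distr (binorm sx sy r) lborel (\<lambda>p. d1 * fst p + d2 * snd p)) A
      = (\<integral>\<^sup>+p. ennreal (?f p) * indicator A (d1 * fst p + d2 * snd p) \<partial>lborel)"
    using measurable_sets_borel[OF L A] unfolding binorm_def
    by (subst emeasure_distr, simp_all, subst emeasure_density)
       (auto intro!: nn_integral_cong split: split_indicator)
  also have "\<dots> = (\<integral>\<^sup>+p. ennreal (?f p) * indicator A (d1 * fst p + d2 * snd p) \<partial>(lborel \<Otimes>\<^sub>M lborel))"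
    by (simp only: lborel_prod)
  also have "\<dots> = (\<integral>\<^sup>+x. \<integral>\<^sup>+y. ennreal (?f (x, y)) * indicator A (d1 * x + d2 * y) \<partial>lborel \<partial>lborel)"
    by (subst lborel.nn_integral_fst[symmetric]) (simp_all only: lborel_prod measurable_lborel1, measurable)
  also have "\<dots> = (\<integral>\<^sup>+x. \<integral>\<^sup>+z. ennreal (?N z * normal_density (M z) s x) * indicator A z \<partial>lborel \<partial>lborel)"
    unfolding M_def s_def v_def by (simp only: binorm_section_integral[OF sx sy r d2 A])
  also have "\<dots> = (\<integral>\<^sup>+z. \<integral>\<^sup>+x. ennreal (?N z * normal_density (M z) s x) * indicator A z \<partial>lborel \<partial>lborel)"
    unfolding M_def by (rule lborel_pair.Fubini'[symmetric])
       (simp only: lborel_prod measurable_lborel2 borel_prod[symmetric] normal_density_def split_beta', measurable)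
  also have "\<dots> = (\<integral>\<^sup>+z. ennreal (?N z) * indicator A z \<partial>lborel)"
  proof (rule nn_integral_cong)
    fix z :: real
    have "(\<integral>\<^sup>+x. ennreal (normal_density (M z) s x) \<partial>lborel) = 1"
      using spos by (subst nn_integral_eq_integral) auto
    then show "(\<integral>\<^sup>+x. ennreal (?N z * normal_density (M z) s x) * indicator A z \<partial>lborel)
       = ennreal (?N z) * indicator A z"
      by (simp add: ennreal_mult' nn_integral_cmult nn_integral_multc mult.assoc)
  qed
  also have "\<dots> = emeasure (centered_normal (sqrt v)) A"
    unfolding centered_normal_def by (subst emeasure_density) auto
  finally show "emeasure (distr (binorm sx sy r) lborel (\<lambda>p. d1 * fst p + d2 * snd p)) A =
      emeasure (centered_normal (sqrt (binorm_variance sx sy r d1 d2))) A"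
    unfolding v_def .
qed (simp add: centered_normal_def)

lemma distr_binorm_swap: "distr (binorm sx sy r) lborel (\<lambda>(x, y). (y, x)) = binorm sy sx r"
proof -
  have sw[measurable]: "(\<lambda>(x::real, y::real). (y, x)) \<in> measurable lborel lborel"
    unfolding lborel_prod[symmetric] by (rule measurable_pair_swap')
  have "binorm sy sx r = density (distr lborel lborel (\<lambda>(x, y). (y, x))) (\<lambda>p. ennreal (binorm_density sy sx r p))"
    unfolding binorm_def lborel_prod[symmetric] lborel_pair.distr_pair_swap[symmetric] ..
  also have "\<dots> = distr (density lborel (\<lambda>(x, y). ennreal (binorm_density sy sx r (y, x)))) lborel (\<lambda>(x, y). (y, x))"
    by (subst density_distr[OF _ sw]) (simp_all add: measurable_lborel1 case_prod_beta')
  also have "\<dots> = distr (binorm sx sy r) lborel (\<lambda>(x, y). (y, x))"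
    unfolding binorm_def by (simp add: case_prod_beta' binorm_density_swap[of sy sx])
  finally show ?thesis ..
qed

lemma distr_binorm_linear:
  fixes sx sy r d1 d2 :: real
  assumes sx: "sx > 0" and sy: "sy > 0" and r: "r\<^sup>2 < 1" and d: "(d1, d2) \<noteq> (0, 0)"
  shows "distr (binorm sx sy r) lborel (\<lambda>p. d1 * fst p + d2 * snd p)
       = centered_normal (sqrt (binorm_variance sx sy r d1 d2))"
proof (cases "d2 = 0")
  case True
  with d have d1: "d1 \<noteq> 0" by simp
  have "(\<lambda>p. d1 * fst p + d2 * snd p) = (\<lambda>p. d2 * fst p + d1 * snd p) \<circ> (\<lambda>(x, y). (y, x))"
    by (auto simp: fun_eq_iff)
  then have "distr (binorm sx sy r) lborel (\<lambda>p. d1 * fst p + d2 * snd p)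
      = distr (distr (binorm sx sy r) lborel (\<lambda>(x, y). (y, x))) lborel (\<lambda>p. d2 * fst p + d1 * snd p)"
    by (simp only:) (rule distr_distr[symmetric]; simp add: binorm_def measurable_lborel1 borel_prod[symmetric])
  also have "\<dots> = centered_normal (sqrt (binorm_variance sx sy r d1 d2))"
    unfolding distr_binorm_swap distr_binorm_linear_nonzero_snd[OF sy sx r d1] binorm_variance_commute[of sy sx r d2 d1] ..
  finally show ?thesis .
qed (rule distr_binorm_linear_nonzero_snd[OF sx sy r])

lemma sets_centered_normal[measurable_cong, simp]: "sets (centered_normal \<sigma>) = sets borel"
  and space_centered_normal[simp]: "space (centered_normal \<sigma>) = UNIV"
  unfolding centered_normal_def by simp_all

lemma prob_space_centered_normal: "\<sigma> > 0 \<Longrightarrow> prob_space (centered_normal \<sigma>)"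
  unfolding centered_normal_def by (rule prob_space_normal_density)

lemma emeasure_centered_normal:
  "A \<in> sets borel \<Longrightarrow> emeasure (centered_normal \<sigma>) A = (\<integral>\<^sup>+x. ennreal (normal_density 0 \<sigma> x) * indicator A x \<partial>lborel)"
  unfolding centered_normal_def by (subst emeasure_density) auto

lemma measure_centered_normal_lessThan:
  assumes "\<sigma> > 0"
  shows "measure (centered_normal \<sigma>) {..<t} = 1 - measure (centered_normal \<sigma>) {t<..}"
proof -
  interpret N: prob_space "centered_normal \<sigma>" using prob_space_centered_normal[OF assms] .
  have "emeasure (centered_normal \<sigma>) {t} = 0"
    by (simp add: emeasure_centered_normal nn_integral_indicator_singleton)
  then have "measure (centered_normal \<sigma>) (UNIV - {t}) = 1"
    using N.prob_compl[of "{t}"] by (simp add: N.emeasure_eq_measure N.prob_space)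
  moreover have "UNIV - {t} = {..<t} \<union> {t<..}" by auto
  moreover have "{..<t} \<inter> {t<..} = {}" by auto
  ultimately show ?thesis
    using N.finite_measure_Union[of "{..<t}" "{t<..}"] by simp
qed

lemma measure_centered_normal_greaterThan_pos:
  assumes "\<sigma> > 0"
  shows "measure (centered_normal \<sigma>) {t<..} > 0"
proof -
  interpret N: prob_space "centered_normal \<sigma>" using prob_space_centered_normal[OF assms] .
  have pos: "normal_density 0 \<sigma> x \<noteq> 0" for x
    using normal_density_pos[OF assms, of 0 x] by simp
  have "emeasure (centered_normal \<sigma>) {t<..} \<noteq> 0"
  proof
    assume "emeasure (centered_normal \<sigma>) {t<..} = 0"
    then have "AE x in lborel. ennreal (normal_density 0 \<sigma> x) * indicator {t<..} x = 0"
      by (simp add: emeasure_centered_normal nn_integral_0_iff_AE)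
    then have "AE x in lborel. x \<notin> {t<..t+1}"
      by eventually_elim (auto simp: pos split: split_indicator)
    then have "emeasure lborel {t<..t+1} = 0"
      by (subst (asm) AE_iff_measurable[of "{t<..t+1}"]) auto
    then show False by simp
  qed
  then show ?thesis by (simp add: N.emeasure_eq_measure zero_less_measure_iff)
qed

lemma measure_centered_normal_greaterThan_ge:
  assumes "\<sigma> > 0" and "t \<ge> 0"
  shows "measure (centered_normal \<sigma>) {t<..} \<ge> 1/2 - t / (sqrt (2 * pi) * \<sigma>)"
proof -
  interpret N: prob_space "centered_normal \<sigma>" using prob_space_centered_normal[OF assms(1)] .
  have "emeasure (centered_normal \<sigma>) {..<0} = emeasure (centered_normal \<sigma>) {0<..}"
    unfolding emeasure_centered_normal[OF lessThan_borel] emeasure_centered_normal[OF greaterThan_borel]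
    by (subst nn_integral_real_affine[where c="-1" and t=0])
       (auto intro!: nn_integral_cong simp: normal_density_def split: split_indicator)
  then have half: "measure (centered_normal \<sigma>) {0<..} = 1/2"
    using measure_centered_normal_lessThan[OF assms(1), of 0] by (simp add: N.emeasure_eq_measure)
  have "emeasure (centered_normal \<sigma>) {0<..t}
      \<le> (\<integral>\<^sup>+x. ennreal (1 / (sqrt (2 * pi) * \<sigma>)) * indicator {0<..t} x \<partial>lborel)"
    using assms(1) unfolding emeasure_centered_normal[OF greaterThanAtMost_borel]
    by (intro nn_integral_mono ennreal_leI)
       (auto simp: normal_density_def real_sqrt_mult divide_le_eq split: split_indicator)
  also have "\<dots> = ennreal (t / (sqrt (2 * pi) * \<sigma>))"
    using assms by (simp add: nn_integral_cmult_indicator ennreal_mult'[symmetric])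
  finally have bound: "measure (centered_normal \<sigma>) {0<..t} \<le> t / (sqrt (2 * pi) * \<sigma>)"
    using assms by (simp add: N.emeasure_eq_measure)
  have "{0<..} = {0<..t} \<union> {t<..}" and "{0<..t} \<inter> {t<..} = {}"
    using assms(2) by auto
  then have "measure (centered_normal \<sigma>) {0<..} = measure (centered_normal \<sigma>) {0<..t} + measure (centered_normal \<sigma>) {t<..}"
    using N.finite_measure_Union[of "{0<..t}" "{t<..}"] by simp
  with half bound show ?thesis by simp
qed

lemma payoff_eq_normal_tail:
  fixes sx sy r :: real and a b :: "real \<times> real"
  defines "P \<equiv> measure (centered_normal (sqrt (binorm_variance sx sy r (fst b - fst a) (snd b - snd a))))
      {((fst b)\<^sup>2 + (snd b)\<^sup>2 - (fst a)\<^sup>2 - (snd a)\<^sup>2) / 2<..}"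
  assumes sx: "sx > 0" and sy: "sy > 0" and r: "r\<^sup>2 < 1" and ab: "a \<noteq> b"
  shows "payoff sx sy r a b = (fst a + snd a) * (1 - P) + (fst b + snd b) * P"
proof -
  define d1 d2 where "d1 = fst b - fst a" and "d2 = snd b - snd a"
  define t where "t = ((fst b)\<^sup>2 + (snd b)\<^sup>2 - (fst a)\<^sup>2 - (snd a)\<^sup>2) / 2"
  define L where "L p = d1 * fst p + d2 * snd p" for p :: "real \<times> real"
  define \<sigma> where "\<sigma> = sqrt (binorm_variance sx sy r d1 d2)"
  have "(d1, d2) \<noteq> (0, 0)" using ab unfolding d1_def d2_def by (auto simp: prod_eq_iff)
  then have \<sigma>: "\<sigma> > 0" and distr: "distr (binorm sx sy r) lborel L = centered_normal \<sigma>"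
    unfolding \<sigma>_def L_def using binorm_variance_pos[OF sx sy r] distr_binorm_linear[OF sx sy r] by auto
  have "L \<in> measurable (binorm sx sy r) lborel"
    unfolding L_def binorm_def by (simp add: borel_prod[symmetric])
  then have preimage: "measure (binorm sx sy r) (L -` A) = measure (centered_normal \<sigma>) A"
    if "A \<in> sets borel" for A
    using that by (subst distr[symmetric], subst measure_distr) (auto simp: binorm_def)
  have "C1 a b = L -` {..<t}" and "C2 a b = L -` {t<..}"
    unfolding C1_def C2_def L_def d1_def d2_def t_def
    by (auto simp: power2_eq_square field_simps)
  then show ?thesis
    using ab measure_centered_normal_lessThan[OF \<sigma>, of t]
    unfolding payoff_def P_def d1_def[symmetric] d2_def[symmetric] t_def[symmetric] \<sigma>_def[symmetric]
    by (simp add: preimage)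
qed

lemma centered_normal_tail_ge_x2star:
  fixes sx sy r d1 d2 m t :: real
  assumes sx: "sx > 0" and sy: "sy > 0" and r: "r \<ge> 0" and m: "0 < m" "m \<le> d1" "m \<le> d2"
    and t: "t \<ge> 0"
  shows "measure (centered_normal (sqrt (binorm_variance sx sy r d1 d2))) {t<..} \<ge> 1/2 - t / (4 * x2star sx sy r * m)"
proof -
  define \<sigma> where "\<sigma> = sqrt (binorm_variance sx sy r d1 d2)"
  have pos: "0 < 4 * x2star sx sy r * m"
    using sx sy r m(1) by (simp add: x2star_def add_pos_pos add_pos_nonneg)
  have "4 * x2star sx sy r * m = sqrt (2 * pi * (m\<^sup>2 * binorm_variance sx sy r 1 1))"
    using m by (simp add: x2star_def binorm_variance_def real_sqrt_mult)
  also have "\<dots> \<le> sqrt (2 * pi * binorm_variance sx sy r d1 d2)"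
    using binorm_variance_mono[OF sx sy r less_imp_le[OF m(1)] m(2,3)] by simp
  finally have le: "4 * x2star sx sy r * m \<le> sqrt (2 * pi) * \<sigma>"
    by (simp add: \<sigma>_def real_sqrt_mult)
  with pos have "0 < sqrt (2 * pi) * \<sigma>" by linarith
  then have \<sigma>: "\<sigma> > 0" by (simp add: zero_less_mult_iff)
  have "t / (sqrt (2 * pi) * \<sigma>) \<le> t / (4 * x2star sx sy r * m)"
    using le pos t \<sigma> by (intro divide_left_mono) simp_all
  with \<sigma> show ?thesis
    using measure_centered_normal_greaterThan_ge[of \<sigma> t] t unfolding \<sigma>_def by simp
qed

lemma min_gap_pos:
  fixes c x y :: real
  assumes "c > 0" "x + y < 0" "x\<^sup>2 + y\<^sup>2 < 2 * c\<^sup>2"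
  shows "min (c - x) (c - y) > 0"
proof (rule ccontr)
  assume "\<not> ?thesis"
  then have "c \<le> \<bar>x\<bar> \<and> c < \<bar>y\<bar> \<or> c \<le> \<bar>y\<bar> \<and> c < \<bar>x\<bar>"
    using assms(2) by auto
  then have "c\<^sup>2 \<le> x\<^sup>2 \<and> c\<^sup>2 < y\<^sup>2 \<or> c\<^sup>2 \<le> y\<^sup>2 \<and> c\<^sup>2 < x\<^sup>2"
    using assms(1) power_mono[of c "\<bar>x\<bar>" 2] power_mono[of c "\<bar>y\<bar>" 2]
      power_strict_mono[of c "\<bar>x\<bar>" 2] power_strict_mono[of c "\<bar>y\<bar>" 2] by auto
  then show False using assms(3) by linarith
qed

lemma min_gap_quadratic_ineq:
  fixes c x y :: real
  assumes c: "c > 0" and s: "x + y < 0" and n: "x\<^sup>2 + y\<^sup>2 < 2 * c\<^sup>2"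
  shows "(2 * c - (x + y)) * (2 * c\<^sup>2 - x\<^sup>2 - y\<^sup>2) < 4 * c * min (c - x) (c - y) * (2 * c + (x + y))"
proof -
  have ineq: "(2 * c - (x + y)) * (2 * c\<^sup>2 - x\<^sup>2 - y\<^sup>2) < 4 * c * (c - x) * (2 * c + (x + y))"
    if s: "x + y < 0" and n: "x\<^sup>2 + y\<^sup>2 < 2 * c\<^sup>2" for x y
  proof -
    define u w where "u = x + y" and "w = x - y"
    define A B where "A = 2 * c + u" and "B = 2 * c - u"
    have "(x + y)\<^sup>2 \<le> 2 * (x\<^sup>2 + y\<^sup>2)"
      using sum_squares_ge_zero[of "x - y" 0] by (simp add: power2_eq_square algebra_simps)
    with n have "u\<^sup>2 < (2 * c)\<^sup>2" unfolding u_def by (simp add: power2_eq_square)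
    with c have "\<bar>u\<bar> < 2 * c" using power2_less_imp_less[of "\<bar>u\<bar>" "2 * c"] by simp
    then have A: "A > 0" unfolding A_def by simp
    have B: "B > 2 * c" unfolding B_def u_def using s by simp
    with c have "B\<^sup>2 - 4 * c\<^sup>2 > 0"
      using mult_strict_mono[of "2 * c" B "2 * c" B] by (simp add: power2_eq_square)
    with A have "0 < (B * w - 2 * c * A)\<^sup>2 + A\<^sup>2 * (B\<^sup>2 - 4 * c\<^sup>2)"
      by (simp add: add_nonneg_pos)
    also have "\<dots> = B * (A\<^sup>2 * B - 4 * c * A * w + B * w\<^sup>2)"
      by (simp add: power2_eq_square algebra_simps)
    finally have "A\<^sup>2 * B - 4 * c * A * w + B * w\<^sup>2 > 0"
      using B c by (simp add: zero_less_mult_iff)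
    also have "A\<^sup>2 * B - 4 * c * A * w + B * w\<^sup>2
      = 2 * (4 * c * (c - x) * (2 * c + (x + y)) - (2 * c - (x + y)) * (2 * c\<^sup>2 - x\<^sup>2 - y\<^sup>2))"
      unfolding A_def B_def u_def w_def by (simp add: power2_eq_square algebra_simps)
    finally show ?thesis by simp
  qed
  show ?thesis
  proof (cases "y \<le> x")
    case True
    then show ?thesis using ineq[OF s n] by simp
  next
    case False
    then show ?thesis using ineq[of y x] s n by (simp add: add.commute diff_diff_eq)
  qed
qed

lemma tail_combination_pos:
  fixes c x y P :: real
  assumes c: "c > 0" and s: "x + y < 0" and n: "x\<^sup>2 + y\<^sup>2 < 2 * c\<^sup>2"
    and P: "1/2 - (2 * c\<^sup>2 - x\<^sup>2 - y\<^sup>2) / (8 * c * min (c - x) (c - y)) \<le> P"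
  shows "(x + y) * (1 - P) + 2 * c * P > 0"
proof -
  define m where "m = min (c - x) (c - y)"
  have m: "m > 0" unfolding m_def using min_gap_pos[OF c s n] .
  have "0 < (4 * c * m * (2 * c + (x + y)) - (2 * c - (x + y)) * (2 * c\<^sup>2 - x\<^sup>2 - y\<^sup>2)) / (8 * c * m)"
    using min_gap_quadratic_ineq[OF c s n, folded m_def] c m by simp
  also have "\<dots> = (x + y) + (2 * c - (x + y)) * (1/2 - (2 * c\<^sup>2 - x\<^sup>2 - y\<^sup>2) / (8 * c * m))"
    using c m by (simp add: field_simps)
  also have "\<dots> \<le> (x + y) + (2 * c - (x + y)) * P"
    using P s c unfolding m_def by (intro add_left_mono mult_left_mono) auto
  finally show ?thesis by (simp add: algebra_simps)
qed

theorem mainTheorem16: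
  fixes sx sy r x1 y1 :: real
  assumes "sx > 0" and "sy > 0" and "0 < r" and "r < 1" and "sx < sy"
    and "x1\<^sup>2 + y1\<^sup>2 < 2 * (x2star sx sy r)\<^sup>2"
  shows "payoff sx sy r (x1, y1) (x2star sx sy r, x2star sx sy r) > 0"
proof -
  define c where "c = x2star sx sy r"
  define t where "t = (2 * c\<^sup>2 - x1\<^sup>2 - y1\<^sup>2) / 2"
  define \<sigma> where "\<sigma> = sqrt (binorm_variance sx sy r (c - x1) (c - y1))"
  define P where "P = measure (centered_normal \<sigma>) {t<..}"
  have r: "r\<^sup>2 < 1" using assms(3,4) by (simp add: power_less_one_iff abs_less_iff)
  have c: "c > 0" using assms(1-3) by (simp add: c_def x2star_def add_pos_pos)
  have n: "x1\<^sup>2 + y1\<^sup>2 < 2 * c\<^sup>2" using assms(6) by (simp add: c_def)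
  then have "(x1, y1) \<noteq> (c, c)" by auto
  then have \<sigma>: "\<sigma> > 0" and payoff: "payoff sx sy r (x1, y1) (c, c) = (x1 + y1) * (1 - P) + 2 * c * P"
    using payoff_eq_normal_tail[OF assms(1,2) r, of "(x1, y1)" "(c, c)"] binorm_variance_pos[OF assms(1,2) r]
    by (auto simp: P_def \<sigma>_def t_def power2_eq_square)
  interpret prob_space "centered_normal \<sigma>" using prob_space_centered_normal[OF \<sigma>] .
  have "0 < P" "P \<le> 1" using measure_centered_normal_greaterThan_pos[OF \<sigma>] by (simp_all add: P_def)
  show ?thesis
  proof (cases "x1 + y1 \<ge> 0")
    case True
    with \<open>0 < P\<close> \<open>P \<le> 1\<close> c show ?thesis unfolding c_def[symmetric] payoff by (simp add: add_nonneg_pos)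
  next
    case False
    then have "min (c - x1) (c - y1) > 0" using min_gap_pos[OF c _ n] by simp
    moreover have "t \<ge> 0" using n by (simp add: t_def)
    ultimately have "1/2 - t / (4 * c * min (c - x1) (c - y1)) \<le> P"
      using centered_normal_tail_ge_x2star[of sx sy r "min (c - x1) (c - y1)" "c - x1" "c - y1" t] assms(1-3)
      unfolding P_def \<sigma>_def c_def by simp
    then show ?thesis unfolding c_def[symmetric] payoff
      using tail_combination_pos[OF c _ n] False by (simp add: t_def)
  qed
qed

end
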